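(* Let $(T_i,x_i)_{i=1}^\infty$ be a sequence of trees, each with a chosen base vertex $x_i$. Then the restricted product $\times_{i=1}^\infty T_i$ has asymptotic property C.
   Context: A tree is a connected acyclic graph, regarded as a metric space on its vertex set with the shortest path metric. Given a sequence of pointed metric spaces $(X_i,x_i)_{i\ge1}$, the restricted product $\times_{i=1}^\infty X_i$ is the set of sequences $(a_i)_{i\ge1}$ with $a_i\in X_i$ for all $i$ and $a_i=x_i$ for all but finitely many $i$, equipped with the metric $d((a_i),(b_i))=\sum_{i=1}^\infty i\cdot d(a_i,b_i)$. For $R>0$, a family $\mathcal U$ of nonempty subsets of a metric space is $R$-disjoint if $d(A,B)>R$ for all distinct $A,B\in\mathcal U$, where $d(A,B)=\inf\{d(a,b):a\in A,b\in B\}$; it is uniformly bounded if $\sup\{\operatorname{diam}U:U\in\mathcal U\}<\infty$. A metric space $X$ has asymptotic property C if for every sequence $R_0\le R_1\le R_2\le\cdots$ of positive reals there exist $n\ge0$ and uniformly bounded $R_i$-disjoint families $\mathcal U_i$ ($i=0,\dots,n$) of subsets of $X$ such that $\bigcup_{i=0}^n\mathcal U_i$ covers $X$. *)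

theory Defs
  imports "HOL-Analysis.Analysis"
begin

definition simple_graph :: "'a set \<Rightarrow> ('a \<Rightarrow> 'a \<Rightarrow> bool) \<Rightarrow> bool" where
  "simple_graph V E \<longleftrightarrow> (\<forall>u v. E u v \<longrightarrow> u \<in> V \<and> v \<in> V \<and> E v u \<and> u \<noteq> v)"

definition walk :: "'a set \<Rightarrow> ('a \<Rightarrow> 'a \<Rightarrow> bool) \<Rightarrow> 'a list \<Rightarrow> bool" where
  "walk V E p \<longleftrightarrow> p \<noteq> [] \<and> set p \<subseteq> V \<and> (\<forall>k. Suc k < length p \<longrightarrow> E (p ! k) (p ! Suc k))"

definition graph_connected :: "'a set \<Rightarrow> ('a \<Rightarrow> 'a \<Rightarrow> bool) \<Rightarrow> bool" where
  "graph_connected V E \<longleftrightarrow>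
     (\<forall>u\<in>V. \<forall>v\<in>V. \<exists>p. walk V E p \<and> hd p = u \<and> last p = v)"

text \<open>A cycle: closed walk v0,...,vn=v0 with n \<ge> 3 and v1,...,vn distinct.\<close>
definition graph_acyclic :: "'a set \<Rightarrow> ('a \<Rightarrow> 'a \<Rightarrow> bool) \<Rightarrow> bool" where
  "graph_acyclic V E \<longleftrightarrow>
     \<not> (\<exists>p. walk V E p \<and> length p \<ge> 4 \<and> hd p = last p \<and> distinct (tl p))"

definition is_tree :: "'a set \<Rightarrow> ('a \<Rightarrow> 'a \<Rightarrow> bool) \<Rightarrow> bool" where
  "is_tree V E \<longleftrightarrow> simple_graph V E \<and> graph_connected V E \<and> graph_acyclic V E"

definition graph_dist :: "'a set \<Rightarrow> ('a \<Rightarrow> 'a \<Rightarrow> bool) \<Rightarrow> 'a \<Rightarrow> 'a \<Rightarrow> nat" where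
  "graph_dist V E u v =
     (LEAST n. \<exists>p. walk V E p \<and> hd p = u \<and> last p = v \<and> length p = Suc n)"

text \<open>Restricted product of pointed spaces; factors indexed by 0,1,2,...
  (factor k here is factor k+1 of the paper), so the weight is Suc k.\<close>
definition restricted_product :: "(nat \<Rightarrow> 'a set) \<Rightarrow> (nat \<Rightarrow> 'a) \<Rightarrow> (nat \<Rightarrow> 'a) set" where
  "restricted_product V x =
     {a. (\<forall>i. a i \<in> V i) \<and> finite {i. a i \<noteq> x i}}"

definition restricted_product_dist ::
  "(nat \<Rightarrow> 'a set) \<Rightarrow> (nat \<Rightarrow> 'a \<Rightarrow> 'a \<Rightarrow> bool) \<Rightarrow> (nat \<Rightarrow> 'a) \<Rightarrow> (nat \<Rightarrow> 'a) \<Rightarrow> real" where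
  "restricted_product_dist V E a b =
     (\<Sum>i. real (Suc i) * real (graph_dist (V i) (E i) (a i) (b i)))"

definition set_distance :: "('b \<Rightarrow> 'b \<Rightarrow> real) \<Rightarrow> 'b set \<Rightarrow> 'b set \<Rightarrow> real" where
  "set_distance d A B = (INF p \<in> A \<times> B. d (fst p) (snd p))"

definition R_disjoint :: "('b \<Rightarrow> 'b \<Rightarrow> real) \<Rightarrow> real \<Rightarrow> 'b set set \<Rightarrow> bool" where
  "R_disjoint d R \<U> \<longleftrightarrow> (\<forall>A\<in>\<U>. \<forall>B\<in>\<U>. A \<noteq> B \<longrightarrow> set_distance d A B > R)"

definition uniformly_bounded :: "('b \<Rightarrow> 'b \<Rightarrow> real) \<Rightarrow> 'b set set \<Rightarrow> bool" where
  "uniformly_bounded d \<U> \<longleftrightarrow> (\<exists>M. \<forall>U\<in>\<U>. \<forall>a\<in>U. \<forall>b\<in>U. d a b \<le> M)"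

definition asymptotic_property_C :: "'b set \<Rightarrow> ('b \<Rightarrow> 'b \<Rightarrow> real) \<Rightarrow> bool" where
  "asymptotic_property_C X d \<longleftrightarrow>
     (\<forall>R :: nat \<Rightarrow> real. (\<forall>i. R i > 0) \<and> mono R \<longrightarrow>
        (\<exists>n \<U>. (\<forall>i\<le>n. (\<forall>A\<in>\<U> i. A \<noteq> {} \<and> A \<subseteq> X)
                      \<and> uniformly_bounded d (\<U> i) \<and> R_disjoint d (R i) (\<U> i))
              \<and> X \<subseteq> (\<Union>i\<le>n. \<Union>(\<U> i))))"

end

theory Submission
  imports Defs "HOL-Library.Nat_Bijection"
begin

text \<open>
  Let \<open>m = \<lfloor>R\<^sub>0\<rfloor>\<close>, \<open>n = 2\<^sup>m - 1\<close> and \<open>L = \<lceil>R\<^sub>n\<rceil>\<close>. Points are grouped into cells by a key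
  that records, for every coordinate \<open>i\<close>, the ancestor of \<open>a\<^sub>i\<close> about \<open>L / (2i + 2)\<close> levels below a
  rounded-down depth of \<open>a\<^sub>i\<close>. Points with equal keys are close in every coordinate and agree
  beyond coordinate \<open>L\<close>, so cells are bounded; different ancestors force a geodesic to descend,
  which costs more than \<open>L\<close> because coordinate \<open>i\<close> carries weight \<open>i + 1\<close>. Rounding depths is
  harmless for \<open>i \<ge> m\<close>, where any change of a coordinate already costs more than \<open>R\<^sub>0\<close>. The
  first \<open>m\<close> depths are rounded to multiples of a large \<open>K\<close> only after adding a shift that encodes
  the depths of coordinates \<open>m, \<dots>, L - 1\<close> in base \<open>2L + 1\<close>; the colour of a cell is the set of
  \<open>k < m\<close> whose shifted depth lies near the bottom of its block. Cells of equal colour are more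
  than \<open>R\<^sub>0\<close> apart, and more than \<open>L \<ge> R\<^sub>t\<close> apart when the colour is nonempty, since then a small
  change of the deep coordinates moves the shift enough to change the \<open>k\<close>-th depth by more
  than \<open>L\<close>. The \<open>2\<^sup>m\<close> colours give the families \<open>\<U>\<^sub>0, \<dots>, \<U>\<^sub>n\<close>.
\<close>

section \<open>Walks\<close>

lemma walk_singleton: "u \<in> V \<Longrightarrow> walk V E [u]"
  by (simp add: walk_def)

lemma walk_append:
  assumes "walk V E p" "walk V E q" "last p = hd q"
  shows "walk V E (p @ tl q)"
proof -
  have pq: "p \<noteq> []" "q \<noteq> []" using assms by (auto simp: walk_def)
  have "set (p @ tl q) \<subseteq> V" using assms pq by (auto simp: walk_def dest: list.set_sel(2))
  moreover have "E ((p @ tl q) ! k) ((p @ tl q) ! Suc k)" if k: "Suc k < length (p @ tl q)" for k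
  proof (cases "Suc k < length p")
    case True then show ?thesis using assms(1) by (simp add: walk_def nth_append)
  next
    case False
    show ?thesis
    proof (cases "k < length p")
      case True
      then have "k = length p - 1" using False by simp
      then have "(p @ tl q) ! k = q ! 0" "(p @ tl q) ! Suc k = q ! 1" "1 < length q"
        using pq assms(3) k by (simp_all add: nth_append last_conv_nth hd_conv_nth nth_tl)
      then show ?thesis using assms(2) by (simp add: walk_def)
    next
      case False
      have b: "Suc (Suc (k - length p)) < length q" using k False pq by simp
      then have "(p @ tl q) ! k = q ! (Suc (k - length p))"
          "(p @ tl q) ! Suc k = q ! Suc (Suc (k - length p))"
        using pq False by (auto simp: nth_append nth_tl Suc_diff_le)
      with b show ?thesis using assms(2) by (simp add: walk_def)
    qed
  qed
  ultimately show ?thesis using pq by (simp add: walk_def)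
qed

lemma last_append_tl:
  "p \<noteq> [] \<Longrightarrow> q \<noteq> [] \<Longrightarrow> last p = hd q \<Longrightarrow> last (p @ tl q) = last q"
  by (cases q) auto

lemma walk_take: "walk V E p \<Longrightarrow> 0 < k \<Longrightarrow> walk V E (take k p)"
  by (auto simp: walk_def dest: in_set_takeD)

lemma walk_drop: "walk V E p \<Longrightarrow> k < length p \<Longrightarrow> walk V E (drop k p)"
  by (auto simp: walk_def dest: in_set_dropD)

lemma walk_rev:
  assumes "simple_graph V E" "walk V E p"
  shows "walk V E (rev p)"
proof -
  have "E (rev p ! k) (rev p ! Suc k)" if k: "Suc k < length p" for k
  proof -
    have "E (p ! (length p - Suc (Suc k))) (p ! Suc (length p - Suc (Suc k)))"
      using assms(2) k by (simp add: walk_def)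
    moreover have "Suc (length p - Suc (Suc k)) = length p - Suc k" using k by simp
    ultimately show ?thesis using assms(1) k by (simp add: rev_nth simple_graph_def)
  qed
  then show ?thesis using assms(2) by (simp add: walk_def)
qed

lemma distinct_subwalk_exists:
  assumes "walk V E p"
  shows "\<exists>q. walk V E q \<and> hd q = hd p \<and> last q = last p \<and> distinct q \<and> set q \<subseteq> set p"
  using assms
proof (induction "length p" arbitrary: p rule: less_induct)
  case less
  show ?case
  proof (cases "distinct p")
    case True then show ?thesis using less.prems by blast
  next
    case False
    then obtain i j where ij: "i < j" "j < length p" "p ! i = p ! j"
      by (metis distinct_conv_nth linorder_neqE_nat)
    define q where "q = take (Suc i) p @ tl (drop j p)"
    have ne: "p \<noteq> []" using ij by auto
    have w: "walk V E q" unfolding q_def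
      by (rule walk_append) (use walk_take[OF less.prems, of "Suc i"] walk_drop[OF less.prems ij(2)] ij
          in \<open>auto simp: take_Suc_conv_app_nth hd_drop_conv_nth\<close>)
    have "hd q = hd p" using ne by (simp add: q_def)
    moreover have "last q = last p"
      using last_append_tl[of "take (Suc i) p" "drop j p"] ij ne
      by (simp add: q_def take_Suc_conv_app_nth hd_drop_conv_nth)
    moreover have "length q < length p" using ij by (simp add: q_def)
    moreover have "set q \<subseteq> set p" unfolding q_def
      by (auto simp: tl_drop simp flip: drop_Suc dest: in_set_takeD in_set_dropD)
    ultimately show ?thesis using less.hyps[OF _ w] by fastforce
  qed
qed

lemma graph_dist_le_walk_length:
  assumes "walk V E p"
  shows "graph_dist V E (hd p) (last p) \<le> length p - 1"
  unfolding graph_dist_def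
  by (rule Least_le, rule exI[of _ p]) (use assms in \<open>cases p, auto simp: walk_def\<close>)

lemma graph_dist_prefix_le:
  assumes "walk V E p" "k < length p"
  shows "graph_dist V E (hd p) (p ! k) \<le> k"
proof -
  have "hd (take (Suc k) p) = hd p" "last (take (Suc k) p) = p ! k"
    using assms(2) by (cases p, simp_all add: take_Suc_conv_app_nth)
  then show ?thesis
    using graph_dist_le_walk_length[OF walk_take[OF assms(1), of "Suc k"]] assms(2) by simp
qed

lemma graph_dist_suffix_le:
  assumes "walk V E p" "k < length p"
  shows "graph_dist V E (p ! k) (last p) \<le> length p - 1 - k"
  using graph_dist_le_walk_length[OF walk_drop[OF assms]] assms
  by (simp add: hd_drop_conv_nth last_drop)

lemma graph_dist_self: "u \<in> V \<Longrightarrow> graph_dist V E u u = 0"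
  using graph_dist_le_walk_length[OF walk_singleton] by fastforce

section \<open>Distances in trees\<close>

locale connected_graph =
  fixes V :: "'a set" and E :: "'a \<Rightarrow> 'a \<Rightarrow> bool"
  assumes simple: "simple_graph V E" and connected: "graph_connected V E"
begin

abbreviation gdist :: "'a \<Rightarrow> 'a \<Rightarrow> nat" where "gdist \<equiv> graph_dist V E"

lemma edge_props: "E u v \<Longrightarrow> u \<in> V \<and> v \<in> V \<and> E v u \<and> u \<noteq> v"
  using simple by (simp add: simple_graph_def)

lemma shortest_walk_exists:
  assumes "u \<in> V" "v \<in> V"
  obtains p where "walk V E p" "hd p = u" "last p = v" "length p = Suc (gdist u v)"
proof -
  obtain p where "walk V E p" "hd p = u" "last p = v"
    using connected assms by (auto simp: graph_connected_def)
  then have "\<exists>n p. walk V E p \<and> hd p = u \<and> last p = v \<and> length p = Suc n"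
    by (intro exI[of _ "length p - 1"] exI[of _ p]) (auto simp: walk_def)
  from LeastI_ex[OF this] show ?thesis using that unfolding graph_dist_def by blast
qed

lemma gdist_sym:
  assumes "u \<in> V" "v \<in> V"
  shows "gdist u v = gdist v u"
proof -
  have "gdist v u \<le> gdist u v" if uv: "u \<in> V" "v \<in> V" for u v
  proof -
    obtain p where p: "walk V E p" "hd p = u" "last p = v" "length p = Suc (gdist u v)"
      using shortest_walk_exists[OF uv] by blast
    then have "p \<noteq> []" by (auto simp: walk_def)
    then show ?thesis
      using graph_dist_le_walk_length[OF walk_rev[OF simple p(1)]] p by (simp add: hd_rev last_rev)
  qed
  then show ?thesis using assms by (simp add: le_antisym)
qed

lemma gdist_triangle:
  assumes "u \<in> V" "v \<in> V" "w \<in> V"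
  shows "gdist u w \<le> gdist u v + gdist v w"
proof -
  obtain p where p: "walk V E p" "hd p = u" "last p = v" "length p = Suc (gdist u v)"
    using shortest_walk_exists assms by blast
  obtain q where q: "walk V E q" "hd q = v" "last q = w" "length q = Suc (gdist v w)"
    using shortest_walk_exists assms by blast
  have ne: "p \<noteq> []" "q \<noteq> []" using p q by (auto simp: walk_def)
  have "walk V E (p @ tl q)" using walk_append[OF p(1) q(1)] p q by simp
  from graph_dist_le_walk_length[OF this] show ?thesis
    using p q ne last_append_tl[OF ne] by simp
qed

lemma gdist_edge: "E u v \<Longrightarrow> gdist u v \<le> 1"
  using graph_dist_le_walk_length[of V E "[u, v]"] edge_props[of u v]
  by (simp add: walk_def less_Suc_eq)

lemma gdist_eq_0D:
  assumes "u \<in> V" "v \<in> V" "gdist u v = 0"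
  shows "u = v"
proof -
  obtain p where "hd p = u" "last p = v" "length p = Suc 0"
    using shortest_walk_exists assms by metis
  then show ?thesis by (cases p) auto
qed

end

locale tree_graph = connected_graph +
  assumes acyclic: "graph_acyclic V E"
begin

text \<open>Otherwise a walk from \<open>w1\<close> to \<open>w2\<close> avoiding \<open>v\<close>, made simple and closed up through
  \<open>v\<close>, would be a cycle.\<close>

lemma common_neighbour_on_walk:
  assumes e: "E v w1" "E v w2" "w1 \<noteq> w2"
    and p: "walk V E p" "hd p = w1" "last p = w2"
  shows "v \<in> set p"
proof (rule ccontr)
  assume v: "v \<notin> set p"
  obtain P where P: "walk V E P" "hd P = w1" "last P = w2" "distinct P" "v \<notin> set P"
    using distinct_subwalk_exists[OF p(1)] p v by blast
  have "P \<noteq> []" "length P \<noteq> 1" using P e(3) by (auto simp: walk_def length_Suc_conv)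
  then have lenP: "2 \<le> length P" by (cases "length P") auto
  have "walk V E [v, w1]" "walk V E [w2, v]"
    using edge_props[OF e(1)] edge_props[OF e(2)] e by (auto simp: walk_def less_Suc_eq)
  then have "walk V E ([v, w1] @ tl P)" "last ([v, w1] @ tl P) = w2"
    using walk_append[of V E "[v, w1]" P] last_append_tl[of "[v, w1]" P] P \<open>P \<noteq> []\<close> by auto
  then have "walk V E (([v, w1] @ tl P) @ tl [w2, v])"
    using walk_append \<open>walk V E [w2, v]\<close> by fastforce
  moreover have "([v, w1] @ tl P) @ tl [w2, v] = v # P @ [v]"
    using P \<open>P \<noteq> []\<close> by (cases P) auto
  ultimately have "walk V E (v # P @ [v])" by metis
  moreover have "4 \<le> length (v # P @ [v])" "distinct (tl (v # P @ [v]))"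
    using lenP P(4,5) by auto
  ultimately show False
    using acyclic unfolding graph_acyclic_def by fastforce
qed

end

locale rooted_tree = tree_graph +
  fixes root :: 'a
  assumes root_in: "root \<in> V"
begin

abbreviation depth :: "'a \<Rightarrow> nat" where "depth v \<equiv> gdist root v"

lemma depth_le_depth_plus_gdist:
  assumes "u \<in> V" "v \<in> V"
  shows "depth u \<le> depth v + gdist u v"
  using gdist_triangle[OF root_in assms(2,1)] gdist_sym[OF assms] by simp

lemma depth_eq_0D: "v \<in> V \<Longrightarrow> depth v = 0 \<Longrightarrow> v = root"
  using gdist_eq_0D[OF root_in] by metis

lemma depth_on_shortest_walk:
  assumes p: "walk V E p" "hd p = root" "last p = v" "length p = Suc (depth v)"
    and k: "k < length p"
  shows "depth (p ! k) = k"
proof -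
  have ne: "p \<noteq> []" using k by auto
  have pk: "p ! k \<in> V" "v \<in> V" using p k by (auto simp: walk_def)
  have "depth (p ! k) \<le> k" using graph_dist_prefix_le[OF p(1) k] p by simp
  moreover have "gdist (p ! k) v \<le> length p - 1 - k" using graph_dist_suffix_le[OF p(1) k] p by simp
  moreover have "depth v \<le> depth (p ! k) + gdist (p ! k) v"
    using gdist_triangle[OF root_in pk] .
  ultimately show ?thesis using p(4) k by linarith
qed

lemma walk_to_lower_neighbour_avoiding:
  assumes e: "E v w" and d: "depth w \<le> depth v"
  obtains p where "walk V E p" "hd p = root" "last p = w" "v \<notin> set p"
proof -
  obtain p where p: "walk V E p" "hd p = root" "last p = w" "length p = Suc (depth w)"
    using shortest_walk_exists[OF root_in] edge_props[OF e] by blast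
  have "v \<notin> set p"
  proof
    assume "v \<in> set p"
    then obtain k where k: "k < length p" "p ! k = v" by (auto simp: in_set_conv_nth)
    then have "k = length p - 1" using depth_on_shortest_walk[OF p k(1)] p d by simp
    moreover have "p \<noteq> []" using k(1) by auto
    ultimately have "v = last p" using k(2) by (simp add: last_conv_nth)
    then show False using p(3) edge_props[OF e] by simp
  qed
  with p that show ?thesis by blast
qed

lemma lower_neighbour_unique:
  assumes e: "E v w1" "E v w2" and d: "depth w1 \<le> depth v" "depth w2 \<le> depth v"
  shows "w1 = w2"
proof (rule ccontr)
  assume ne: "w1 \<noteq> w2"
  obtain p1 where p1: "walk V E p1" "hd p1 = root" "last p1 = w1" "v \<notin> set p1"
    using walk_to_lower_neighbour_avoiding[OF e(1) d(1)] .
  obtain p2 where p2: "walk V E p2" "hd p2 = root" "last p2 = w2" "v \<notin> set p2"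
    using walk_to_lower_neighbour_avoiding[OF e(2) d(2)] .
  have ne12: "rev p1 \<noteq> []" "p2 \<noteq> []" using p1 p2 by (auto simp: walk_def)
  let ?p = "rev p1 @ tl p2"
  have "walk V E ?p"
    using walk_append[OF walk_rev[OF simple p1(1)] p2(1)] p1 p2 ne12 by (simp add: last_rev)
  moreover have "hd ?p = w1" "last ?p = w2"
    using p1 p2 ne12 last_append_tl[OF ne12] by (auto simp: hd_rev last_rev)
  ultimately have "v \<in> set ?p" using common_neighbour_on_walk[OF e ne] by blast
  then show False using p1 p2 ne12 by (auto dest: list.set_sel(2))
qed

definition parent :: "'a \<Rightarrow> 'a" where
  "parent v = (SOME w. E v w \<and> Suc (depth w) = depth v)"

lemma parent_exists:
  assumes v: "v \<in> V" "v \<noteq> root"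
  shows "\<exists>w. E v w \<and> Suc (depth w) = depth v"
proof -
  obtain p where p: "walk V E p" "hd p = root" "last p = v" "length p = Suc (depth v)"
    using shortest_walk_exists[OF root_in v(1)] by blast
  have d0: "depth v \<noteq> 0" using depth_eq_0D v by blast
  define w where "w = p ! (depth v - 1)"
  have "depth w = depth v - 1" using depth_on_shortest_walk[OF p, of "depth v - 1"] p by (simp add: w_def)
  moreover have "E w v"
  proof -
    have "Suc (depth v - 1) < length p" using p(4) d0 by simp
    then have "E (p ! (depth v - 1)) (p ! Suc (depth v - 1))" using p(1) by (simp add: walk_def)
    moreover have "p ! Suc (depth v - 1) = v" using p d0
      by (metis Suc_pred' last_conv_nth diff_Suc_1 list.size(3) nat.distinct(1) neq0_conv)
    ultimately show ?thesis by (simp add: w_def)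
  qed
  ultimately show ?thesis using edge_props d0 by (intro exI[of _ w]) auto
qed

lemma parent:
  assumes "v \<in> V" "v \<noteq> root"
  shows "E v (parent v)" "Suc (depth (parent v)) = depth v"
  using someI_ex[OF parent_exists[OF assms]] unfolding parent_def by auto

lemma edge_to_deeper:
  assumes e: "E u v" and d: "depth u \<le> depth v"
  shows "depth v = Suc (depth u)" "parent v = u"
proof -
  have uv: "u \<in> V" "v \<in> V" "E v u" "u \<noteq> v" using edge_props[OF e] by auto
  have "v \<noteq> root"
    using d depth_eq_0D[OF uv(1)] uv(4) graph_dist_self[OF root_in] by fastforce
  then show "parent v = u" "depth v = Suc (depth u)"
    using lower_neighbour_unique[OF parent(1) uv(3)] parent(2) uv(2) d by force+
qed

lemma funpow_parent:
  assumes v: "v \<in> V" and j: "j \<le> depth v"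
  shows "(parent ^^ j) v \<in> V \<and> depth ((parent ^^ j) v) = depth v - j \<and> gdist v ((parent ^^ j) v) \<le> j"
  using j
proof (induction j)
  case 0 then show ?case using v graph_dist_self by simp
next
  case (Suc j)
  let ?w = "(parent ^^ j) v"
  have w: "?w \<in> V" "depth ?w = depth v - j" "gdist v ?w \<le> j" using Suc by auto
  have "?w \<noteq> root" using w Suc.prems graph_dist_self[OF root_in] by auto
  then have pw: "E ?w (parent ?w)" "Suc (depth (parent ?w)) = depth ?w" using parent[OF w(1)] by auto
  then have pin: "parent ?w \<in> V" using edge_props by blast
  have "gdist v (parent ?w) \<le> gdist v ?w + gdist ?w (parent ?w)"
    using gdist_triangle[OF v w(1) pin] .
  also have "\<dots> \<le> Suc j" using w(3) gdist_edge[OF pw(1)] by simp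
  finally show ?case using pin pw w by simp
qed

definition ancestor :: "'a \<Rightarrow> nat \<Rightarrow> 'a" where
  "ancestor v l = (parent ^^ (depth v - l)) v"

lemma ancestor:
  assumes "v \<in> V" "l \<le> depth v"
  shows "ancestor v l \<in> V" "depth (ancestor v l) = l" "gdist v (ancestor v l) \<le> depth v - l"
  using funpow_parent[OF assms(1), of "depth v - l"] assms unfolding ancestor_def by auto

lemma ancestor_depth_self: "ancestor v (depth v) = v"
  by (simp add: ancestor_def)

lemma ancestor_0: "v \<in> V \<Longrightarrow> ancestor v 0 = root"
  using ancestor[of v 0] depth_eq_0D by simp

lemma gdist_le_if_same_ancestor:
  assumes uv: "u \<in> V" "v \<in> V" and l: "l \<le> depth u" "l \<le> depth v"
    and eq: "ancestor u l = ancestor v l"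
  shows "gdist u v + 2 * l \<le> depth u + depth v"
proof -
  have a: "ancestor u l \<in> V" "gdist u (ancestor u l) \<le> depth u - l" using ancestor[OF uv(1) l(1)] by auto
  have b: "gdist v (ancestor v l) \<le> depth v - l" using ancestor[OF uv(2) l(2)] by auto
  have "gdist u v \<le> gdist u (ancestor u l) + gdist (ancestor u l) v"
    using gdist_triangle[OF uv(1) a(1) uv(2)] .
  also have "gdist (ancestor u l) v = gdist v (ancestor v l)" using gdist_sym[OF a(1) uv(2)] eq by simp
  finally show ?thesis using a b l by linarith
qed

lemma ancestor_edge:
  assumes e: "E u v" and l: "l \<le> depth u" "l \<le> depth v"
  shows "ancestor u l = ancestor v l"
proof -
  have *: "ancestor u l = ancestor v l"
    if e: "E u v" and l: "l \<le> depth u" and d: "depth u \<le> depth v" for u v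
  proof -
    have "ancestor v l = (parent ^^ (depth u - l)) (parent v)"
      using edge_to_deeper[OF e d] l
      by (simp add: ancestor_def Suc_diff_le funpow_Suc_right del: funpow.simps)
    then show ?thesis using edge_to_deeper[OF e d] by (simp add: ancestor_def)
  qed
  show ?thesis
    using *[OF e l(1)] *[of v u] edge_props[OF e] l by (cases "depth u \<le> depth v") auto
qed

lemma ancestor_along_walk:
  assumes p: "walk V E p" and l: "\<And>k. k < length p \<Longrightarrow> l \<le> depth (p ! k)"
    and k: "k < length p"
  shows "ancestor (p ! k) l = ancestor (p ! 0) l"
  using k
proof (induction k)
  case (Suc k)
  then have "E (p ! k) (p ! Suc k)" using p by (simp add: walk_def)
  then show ?case using ancestor_edge l Suc by simp
qed simp

text \<open>A geodesic between vertices with different ancestors at level \<open>l\<close> has to pass below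
  level \<open>l\<close>.\<close>

lemma gdist_ge_if_distinct_ancestors:
  assumes uv: "u \<in> V" "v \<in> V" and l: "l \<le> depth u" "l \<le> depth v"
    and ne: "ancestor u l \<noteq> ancestor v l"
  shows "depth u + depth v + 2 \<le> gdist u v + 2 * l"
proof -
  obtain p where p: "walk V E p" "hd p = u" "last p = v" "length p = Suc (gdist u v)"
    using shortest_walk_exists[OF uv] by blast
  have pne: "p \<noteq> []" using p by auto
  have "\<exists>k<length p. depth (p ! k) < l"
  proof (rule ccontr)
    assume "\<not> ?thesis"
    then have "\<And>k. k < length p \<Longrightarrow> l \<le> depth (p ! k)" using not_less by blast
    from ancestor_along_walk[OF p(1) this, of "length p - 1"] pne
    have "ancestor (p ! (length p - 1)) l = ancestor (p ! 0) l" by simp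
    then show False using ne p pne by (simp add: last_conv_nth hd_conv_nth)
  qed
  then obtain k where k: "k < length p" "depth (p ! k) < l" by blast
  have pk: "p ! k \<in> V" using p k by (auto simp: walk_def)
  have "gdist u (p ! k) \<le> k" using graph_dist_prefix_le[OF p(1) k(1)] p by simp
  moreover have "gdist (p ! k) v \<le> length p - 1 - k" using graph_dist_suffix_le[OF p(1) k(1)] p by simp
  moreover have "depth u \<le> depth (p ! k) + gdist u (p ! k)"
    using depth_le_depth_plus_gdist[OF uv(1) pk] gdist_sym[OF uv(1) pk] by simp
  moreover have "depth v \<le> depth (p ! k) + gdist (p ! k) v"
    using depth_le_depth_plus_gdist[OF uv(2) pk] gdist_sym[OF pk uv(2)] by simp
  ultimately show ?thesis using k p(4) by linarith
qed

end

section \<open>The restricted product metric\<close>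

lemma restricted_product_coord: "a \<in> restricted_product V x \<Longrightarrow> a i \<in> V i"
  by (simp add: restricted_product_def)

lemma restricted_product_dist_sums:
  assumes "a \<in> restricted_product V x" "b \<in> restricted_product V x"
    and "finite S" "\<And>i. i \<notin> S \<Longrightarrow> a i = b i"
  shows "(\<lambda>i. real (Suc i) * real (graph_dist (V i) (E i) (a i) (b i)))
           sums (\<Sum>i\<in>S. real (Suc i) * real (graph_dist (V i) (E i) (a i) (b i)))"
proof (rule sums_finite)
  fix i assume "i \<notin> S"
  moreover have "b i \<in> V i" using assms(2) by (rule restricted_product_coord)
  ultimately show "real (Suc i) * real (graph_dist (V i) (E i) (a i) (b i)) = 0"
    using assms(4) graph_dist_self by simp
qed (rule assms(3))

lemma restricted_product_dist_eq_sum: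
  assumes "a \<in> restricted_product V x" "b \<in> restricted_product V x"
    and "\<And>i. N \<le> i \<Longrightarrow> a i = b i"
  shows "restricted_product_dist V E a b = (\<Sum>i<N. real (Suc i) * real (graph_dist (V i) (E i) (a i) (b i)))"
  using restricted_product_dist_sums[OF assms(1,2), of "{..<N}" E] assms(3)
  unfolding restricted_product_dist_def by (simp add: sums_iff not_less)

lemma restricted_product_dist_ge_coord:
  assumes a: "a \<in> restricted_product V x" and b: "b \<in> restricted_product V x"
  shows "real (Suc i) * real (graph_dist (V i) (E i) (a i) (b i)) \<le> restricted_product_dist V E a b"
proof -
  let ?f = "\<lambda>i. real (Suc i) * real (graph_dist (V i) (E i) (a i) (b i))"
  have "finite ({i. a i \<noteq> x i} \<union> {i. b i \<noteq> x i})"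
    using a b by (simp add: restricted_product_def)
  from restricted_product_dist_sums[OF a b this] have "summable ?f" by (auto simp: sums_iff)
  from sum_le_suminf[OF this, of "{i}"] show ?thesis by (simp add: restricted_product_dist_def)
qed

lemma digits_eq_0_if_expansion_eq_0:
  fixes w :: "nat \<Rightarrow> int" and C :: int
  assumes "\<And>j. j < N \<Longrightarrow> \<bar>w j\<bar> < C" and "(\<Sum>j<N. C ^ j * w j) = 0" and "j < N"
  shows "w j = 0"
  using assms
proof (induction N arbitrary: w j)
  case (Suc N)
  have expand: "(\<Sum>j<Suc N. C ^ j * w j) = w 0 + C * (\<Sum>j<N. C ^ j * w (Suc j))"
    by (subst sum.lessThan_Suc_shift) (simp add: sum_distrib_left mult.assoc)
  then have "w 0 = C * - (\<Sum>j<N. C ^ j * w (Suc j))" using Suc.prems(2) by simp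
  then have "C dvd w 0" by (rule dvdI)
  then have w0: "w 0 = 0" using Suc.prems(1)[of 0] dvd_imp_le_int[of "w 0" C] by fastforce
  then have "(\<Sum>j<N. C ^ j * w (Suc j)) = 0" using Suc.prems(2) expand Suc.prems(1)[of 0] by simp
  with Suc.IH[of "\<lambda>j. w (Suc j)"] Suc.prems(1) have "\<And>j. j < N \<Longrightarrow> w (Suc j) = 0" by simp
  then show ?case using w0 Suc.prems(3) by (cases j) auto
qed simp

lemma div_ne_imp_diff_gt:
  fixes y1 y2 K g :: nat
  assumes "y1 div K \<noteq> y2 div K" "(y1 mod K < g) = (y2 mod K < g)" "2 * g \<le> K"
  shows "int g + 1 \<le> \<bar>int y1 - int y2\<bar>"
proof -
  have K0: "0 < K" using assms(1) by (cases "K = 0") auto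
  have *: "y1 + g + 1 \<le> y2"
    if lt: "y1 div K < y2 div K" and h: "(y1 mod K < g) = (y2 mod K < g)" for y1 y2
  proof -
    have "y1 div K * K + K \<le> y2 div K * K"
      using mult_le_mono1[of "Suc (y1 div K)" "y2 div K" K] lt by simp
    moreover have "y1 = y1 div K * K + y1 mod K" "y2 = y2 div K * K + y2 mod K" by simp_all
    moreover have "y1 mod K < K" using K0 by simp
    ultimately show ?thesis using h assms(3) by (cases "y1 mod K < g") linarith+
  qed
  show ?thesis
  proof (cases "y1 div K < y2 div K")
    case True
    then show ?thesis using *[OF True assms(2)] by linarith
  next
    case False
    then have lt: "y2 div K < y1 div K" using assms(1) by simp
    show ?thesis using *[OF lt sym[OF assms(2)]] by linarith
  qed
qed

lemma shifted_residue_diff_gt: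
  fixes qb qc pb pc sb sc rb rc K g G A L :: int
  assumes "rb = qb * K + pb - sb" "rc = qc * K + pc - sc"
    and "0 \<le> pb" "pb < g" "0 \<le> pc" "pc < g"
    and "G \<le> \<bar>sb - sc\<bar>" "\<bar>sb - sc\<bar> \<le> A" "A + g + L + 1 \<le> K" "g + L \<le> G" "0 \<le> L"
  shows "L + 1 \<le> \<bar>rb - rc\<bar>"
proof -
  have p: "\<bar>pb - pc\<bar> < g" using assms(3-6) by (simp add: abs_less_iff)
  have d: "rb - rc = (qb - qc) * K + ((pb - pc) - (sb - sc))" using assms(1,2) by (simp add: algebra_simps)
  show ?thesis
  proof (cases "qb = qc")
    case True
    then show ?thesis using d p assms(7,10) by (simp add: abs_if split: if_splits)
  next
    case False
    have K0: "0 < K" using assms(8,9,11) abs_ge_zero[of "sb - sc"] p by linarith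
    have "K \<le> \<bar>qb - qc\<bar> * K" using False K0 by (simp add: mult_le_cancel_right1)
    then have "K \<le> \<bar>(qb - qc) * K\<bar>" using K0 by (simp add: abs_mult)
    moreover have "\<bar>(pb - pc) - (sb - sc)\<bar> \<le> \<bar>pb - pc\<bar> + \<bar>sb - sc\<bar>" by (rule abs_triangle_ineq4)
    ultimately show ?thesis using d p assms(8,9) by linarith
  qed
qed

locale tree_product =
  fixes V :: "nat \<Rightarrow> 'a set" and E :: "nat \<Rightarrow> 'a \<Rightarrow> 'a \<Rightarrow> bool" and x :: "nat \<Rightarrow> 'a"
  assumes trees: "\<And>i. is_tree (V i) (E i)" and roots: "\<And>i. x i \<in> V i"
begin

abbreviation X :: "(nat \<Rightarrow> 'a) set" where "X \<equiv> restricted_product V x"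
abbreviation dd :: "(nat \<Rightarrow> 'a) \<Rightarrow> (nat \<Rightarrow> 'a) \<Rightarrow> real" where "dd \<equiv> restricted_product_dist V E"
abbreviation gd :: "nat \<Rightarrow> 'a \<Rightarrow> 'a \<Rightarrow> nat" where "gd i \<equiv> graph_dist (V i) (E i)"
abbreviation depth :: "nat \<Rightarrow> 'a \<Rightarrow> nat" where "depth i v \<equiv> graph_dist (V i) (E i) (x i) v"
abbreviation anc :: "nat \<Rightarrow> 'a \<Rightarrow> nat \<Rightarrow> 'a" where "anc i \<equiv> rooted_tree.ancestor (V i) (E i) (x i)"

lemma rooted_tree: "rooted_tree (V i) (E i) (x i)"
  using trees[of i] roots[of i]
  by (simp add: rooted_tree_def rooted_tree_axioms_def tree_graph_def tree_graph_axioms_def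
      connected_graph_def is_tree_def)

lemma depth_diff_le_gd:
  assumes "b \<in> X" "c \<in> X"
  shows "\<bar>int (depth i (b i)) - int (depth i (c i))\<bar> \<le> int (gd i (b i) (c i))"
proof -
  interpret T: rooted_tree "V i" "E i" "x i" by (rule rooted_tree)
  have "b i \<in> V i" "c i \<in> V i" using assms restricted_product_coord by auto
  then show ?thesis
    using T.depth_le_depth_plus_gdist T.gdist_sym by (smt (verit) of_nat_add of_nat_le_iff)
qed

lemma dd_ge_if_gd_ge:
  assumes "b \<in> X" "c \<in> X" "D \<le> gd i (b i) (c i)"
  shows "real D \<le> dd b c"
proof -
  have "real D \<le> real (Suc i) * real (gd i (b i) (c i))"
    using assms(3) mult_right_mono[of 1 "real (Suc i)" "real (gd i (b i) (c i))"] by simp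
  also have "\<dots> \<le> dd b c" by (rule restricted_product_dist_ge_coord[OF assms(1,2)])
  finally show ?thesis .
qed

lemma dd_ge_if_coord_ne:
  assumes "b \<in> X" "c \<in> X" "b i \<noteq> c i"
  shows "real (Suc i) \<le> dd b c"
proof -
  interpret T: rooted_tree "V i" "E i" "x i" by (rule rooted_tree)
  have "gd i (b i) (c i) \<noteq> 0"
    using T.gdist_eq_0D assms restricted_product_coord by metis
  then have "real (Suc i) * 1 \<le> real (Suc i) * real (gd i (b i) (c i))"
    by (intro mult_left_mono) auto
  also have "\<dots> \<le> dd b c" by (rule restricted_product_dist_ge_coord[OF assms(1,2)])
  finally show ?thesis by simp
qed

end

section \<open>The cover\<close>

lemma set_distance_ge:
  assumes "A \<noteq> {}" "B \<noteq> {}" "\<And>a b. a \<in> A \<Longrightarrow> b \<in> B \<Longrightarrow> D \<le> d a b"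
  shows "D \<le> set_distance d A B"
  unfolding set_distance_def using assms by (intro cINF_greatest) auto

locale tree_product_cover = tree_product +
  fixes R :: "nat \<Rightarrow> real"
  assumes R_pos: "\<And>i. R i > 0" and R_mono: "mono R"
begin

text \<open>The only constraints used are \<open>2g \<le> K\<close>, \<open>g + L \<le> G\<close> and \<open>A + g + L + 1 \<le> K\<close>: if the
  depths of the coordinates \<open>m, \<dots>, L - 1\<close> change by at most \<open>L\<close> each and not all stay equal,
  the shift changes by at least \<open>G\<close> and at most \<open>A\<close>.\<close>

definition m :: nat where
  "m = nat \<lfloor>R 0\<rfloor>"
definition n :: nat where
  "n = set_encode {..<m}"
definition L :: nat where
  "L = nat \<lceil>R n\<rceil>"
definition g :: nat where
  "g = L + 1"
definition G :: nat where
  "G = 2 * L + 2"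
definition C :: nat where
  "C = 2 * L + 1"
definition A :: nat where
  "A = G * L * (\<Sum>j<L - m. C ^ j)"
definition K :: nat where
  "K = A + g + L + 1"

definition shift :: "(nat \<Rightarrow> 'a) \<Rightarrow> nat" where
  "shift a = (\<Sum>j<L - m. G * C ^ j * depth (m + j) (a (m + j)))"
definition shifted_depth :: "nat \<Rightarrow> (nat \<Rightarrow> 'a) \<Rightarrow> nat" where
  "shifted_depth k a = depth k (a k) + shift a"
definition colour :: "(nat \<Rightarrow> 'a) \<Rightarrow> nat set" where
  "colour a = {k. k < m \<and> shifted_depth k a mod K < g}"
definition slack :: "nat \<Rightarrow> nat" where
  "slack i = L div (2 * Suc i)"
definition level :: "nat \<Rightarrow> (nat \<Rightarrow> 'a) \<Rightarrow> nat" where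
  "level i a = (if i < m then shifted_depth i a div K * K - shift a else depth i (a i))"
definition anc_level :: "nat \<Rightarrow> (nat \<Rightarrow> 'a) \<Rightarrow> nat" where
  "anc_level i a = level i a - slack i"

definition key :: "(nat \<Rightarrow> 'a) \<Rightarrow> nat set \<times> (nat \<Rightarrow> nat) \<times> (nat \<Rightarrow> nat) \<times> (nat \<Rightarrow> 'a)" where
  "key a = (colour a, \<lambda>i. if i < m then shifted_depth i a div K else 0,
     \<lambda>i. if m \<le> i then depth i (a i) else 0, \<lambda>i. anc i (a i) (anc_level i a))"

definition cell :: "(nat \<Rightarrow> 'a) \<Rightarrow> (nat \<Rightarrow> 'a) set" where
  "cell a = {b \<in> X. key b = key a}"
definition family :: "nat \<Rightarrow> (nat \<Rightarrow> 'a) set set" where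
  "family t = {cell a | a. a \<in> X \<and> set_encode (colour a) = t}"

lemma m_le_R0: "real m \<le> R 0" and R0_lt_m: "R 0 < real m + 1"
  using R_pos[of 0] unfolding m_def by linarith+

lemma R_le_L: "t \<le> n \<Longrightarrow> R t \<le> real L"
  using R_mono real_nat_ceiling_ge[of "R n"] unfolding mono_def L_def by (meson order_trans)

lemma m_le_L: "m \<le> L"
  using m_le_R0 R_le_L[of 0] by simp

lemma slack_le: "slack i \<le> L"
  by (simp add: slack_def)

lemma slack_mult_gt: "L < (slack i + 1) * (2 * Suc i)"
proof -
  have "0 < 2 * Suc i" by simp
  from mod_less_divisor[OF this, of L] div_mult_mod_eq[of L "2 * Suc i"]
  show ?thesis unfolding slack_def by (simp only: add_mult_distrib mult_1)
qed

lemma key_eqD: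
  assumes "key b = key c"
  shows "colour b = colour c" "\<And>i. i < m \<Longrightarrow> shifted_depth i b div K = shifted_depth i c div K"
    "\<And>i. m \<le> i \<Longrightarrow> depth i (b i) = depth i (c i)"
    "\<And>i. anc i (b i) (anc_level i b) = anc i (c i) (anc_level i c)"
  using assms unfolding key_def by (auto dest: fun_cong) (metis (mono_tags))+

lemma shift_eq: "(\<And>i. m \<le> i \<Longrightarrow> depth i (b i) = depth i (c i)) \<Longrightarrow> shift b = shift c"
  unfolding shift_def by (intro sum.cong) auto

lemma level_eq_if_key_eq: "key b = key c \<Longrightarrow> level i b = level i c"
  using key_eqD[of b c] shift_eq[of b c] unfolding level_def shifted_depth_def by auto

lemma level_le_depth: "level i a \<le> depth i (a i)"
proof (cases "i < m")
  case True
  then have "level i a = shifted_depth i a div K * K - shift a" by (simp add: level_def)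
  moreover have "shifted_depth i a div K * K \<le> shifted_depth i a" by simp
  ultimately show ?thesis unfolding shifted_depth_def by arith
qed (simp add: level_def)

lemma depth_le_level_plus_K: "depth i (a i) \<le> level i a + K"
proof (cases "i < m")
  case True
  then have "level i a = shifted_depth i a div K * K - shift a" by (simp add: level_def)
  moreover have "shifted_depth i a = shifted_depth i a div K * K + shifted_depth i a mod K" by simp
  moreover have "shifted_depth i a mod K < K" by (simp add: K_def)
  ultimately show ?thesis unfolding shifted_depth_def by arith
qed (simp add: level_def)

lemma anc_level_le_depth: "anc_level i a \<le> depth i (a i)"
  using level_le_depth[of i a] by (simp add: anc_level_def)

lemma gd_le_if_key_eq:
  assumes b: "b \<in> X" and c: "c \<in> X" and k: "key b = key c"
  shows "gd i (b i) (c i) \<le> 2 * K + 2 * L"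
proof -
  interpret T: rooted_tree "V i" "E i" "x i" by (rule rooted_tree)
  have bc: "b i \<in> V i" "c i \<in> V i" using b c restricted_product_coord by auto
  have lc: "anc_level i c = anc_level i b" using level_eq_if_key_eq[OF k] by (simp add: anc_level_def)
  have "gd i (b i) (c i) + 2 * anc_level i b \<le> depth i (b i) + depth i (c i)"
    using T.gdist_le_if_same_ancestor[OF bc anc_level_le_depth anc_level_le_depth[of i c, unfolded lc]]
      key_eqD(4)[OF k, of i] lc by simp
  moreover have "depth i (b i) \<le> level i b + K" "depth i (c i) \<le> level i b + K"
    using depth_le_level_plus_K[of i b] depth_le_level_plus_K[of i c] level_eq_if_key_eq[OF k] by auto
  moreover have "level i b \<le> anc_level i b + L" using slack_le[of i] by (simp add: anc_level_def)
  ultimately show ?thesis by linarith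
qed

lemma coord_eq_if_key_eq:
  assumes b: "b \<in> X" and c: "c \<in> X" and k: "key b = key c" and i: "L \<le> i"
  shows "b i = c i"
proof -
  interpret T: rooted_tree "V i" "E i" "x i" by (rule rooted_tree)
  have "anc_level i a = depth i (a i)" for a
    using i m_le_L by (simp add: anc_level_def level_def slack_def)
  then show ?thesis using key_eqD(4)[OF k, of i] T.ancestor_depth_self by simp
qed

definition cell_diam :: real where
  "cell_diam = (\<Sum>i<L. real (Suc i) * real (2 * K + 2 * L))"

lemma dd_le_if_key_eq:
  assumes b: "b \<in> X" and c: "c \<in> X" and k: "key b = key c"
  shows "dd b c \<le> cell_diam"
proof -
  have "dd b c = (\<Sum>i<L. real (Suc i) * real (gd i (b i) (c i)))"
    using restricted_product_dist_eq_sum[OF b c] coord_eq_if_key_eq[OF b c k] by blast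
  also have "\<dots> \<le> cell_diam" unfolding cell_diam_def
    using gd_le_if_key_eq[OF b c k]
    by (intro sum_mono mult_left_mono) (simp_all only: of_nat_le_iff of_nat_0_le_iff)
  finally show ?thesis .
qed

lemma dd_gt_L_if_quotients_differ:
  assumes b: "b \<in> X" and c: "c \<in> X" and "colour b = colour c" "shift b = shift c"
    and "k < m" "shifted_depth k b div K \<noteq> shifted_depth k c div K"
  shows "real L + 1 \<le> dd b c"
proof -
  have "(shifted_depth k b mod K < g) = (shifted_depth k c mod K < g)"
    using assms(3,5) unfolding colour_def by blast
  moreover have "2 * g \<le> K" by (simp add: K_def g_def)
  ultimately have "int g + 1 \<le> \<bar>int (shifted_depth k b) - int (shifted_depth k c)\<bar>"
    using div_ne_imp_diff_gt[OF assms(6)] by blast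
  also have "\<dots> = \<bar>int (depth k (b k)) - int (depth k (c k))\<bar>"
    using assms(4) by (simp add: shifted_depth_def)
  also have "\<dots> \<le> int (gd k (b k) (c k))" by (rule depth_diff_le_gd[OF b c])
  finally have "L + 1 \<le> gd k (b k) (c k)" by (simp add: g_def)
  then show ?thesis using dd_ge_if_gd_ge[OF b c] by fastforce
qed

lemma dd_gt_L_if_ancestors_differ:
  assumes b: "b \<in> X" and c: "c \<in> X" and lev: "level i b = level i c"
    and ne: "anc i (b i) (anc_level i b) \<noteq> anc i (c i) (anc_level i c)"
  shows "real L + 1 \<le> dd b c"
proof -
  interpret T: rooted_tree "V i" "E i" "x i" by (rule rooted_tree)
  have bc: "b i \<in> V i" "c i \<in> V i" using b c restricted_product_coord by auto
  have lc: "anc_level i c = anc_level i b" using lev by (simp add: anc_level_def)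
  have "anc_level i b \<noteq> 0"
  proof
    assume "anc_level i b = 0"
    then show False using ne lc T.ancestor_0[OF bc(1)] T.ancestor_0[OF bc(2)] by simp
  qed
  then have slack: "anc_level i b + slack i = level i b" by (simp add: anc_level_def)
  have "depth i (b i) + depth i (c i) + 2 \<le> gd i (b i) (c i) + 2 * anc_level i b"
    using T.gdist_ge_if_distinct_ancestors[OF bc anc_level_le_depth anc_level_le_depth[of i c, unfolded lc]]
      ne lc by simp
  moreover have "level i b \<le> depth i (b i)" "level i b \<le> depth i (c i)"
    using level_le_depth[of i b] level_le_depth[of i c] lev by auto
  ultimately have "2 * slack i + 2 \<le> gd i (b i) (c i)" using slack by linarith
  then have "(slack i + 1) * (2 * Suc i) \<le> Suc i * gd i (b i) (c i)"
    using mult_le_mono2[of "2 * slack i + 2" "gd i (b i) (c i)" "Suc i"] by (simp add: algebra_simps)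
  then have "L + 1 \<le> Suc i * gd i (b i) (c i)" using slack_mult_gt[of i] by linarith
  then have "real L + 1 \<le> real (Suc i) * real (gd i (b i) (c i))"
    by (metis of_nat_1 of_nat_add of_nat_le_iff of_nat_mult)
  also have "\<dots> \<le> dd b c" by (rule restricted_product_dist_ge_coord[OF b c])
  finally show ?thesis .
qed

lemma int_depth_eq:
  "int (depth k (a k)) = int (shifted_depth k a div K) * int K + int (shifted_depth k a mod K) - int (shift a)"
proof -
  have "int (shifted_depth k a) = int (shifted_depth k a div K) * int K + int (shifted_depth k a mod K)"
    by (simp only: of_nat_add[symmetric] of_nat_mult[symmetric] div_mult_mod_eq)
  then show ?thesis by (simp add: shifted_depth_def)
qed

text \<open>The shift reads the depths of the coordinates \<open>m, \<dots>, L - 1\<close> as digits in base \<open>C\<close>,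
  so it detects any change of them by at most \<open>L\<close>.\<close>

lemma shift_diff_bounds:
  assumes small: "\<And>i. m \<le> i \<Longrightarrow> depth i (b i) \<noteq> depth i (c i) \<Longrightarrow>
      i < L \<and> \<bar>int (depth i (b i)) - int (depth i (c i))\<bar> \<le> int L"
    and i0: "m \<le> i0" "depth i0 (b i0) \<noteq> depth i0 (c i0)"
  shows "int G \<le> \<bar>int (shift b) - int (shift c)\<bar>" "\<bar>int (shift b) - int (shift c)\<bar> \<le> int A"
proof -
  define w where "w j = int (depth (m + j) (b (m + j))) - int (depth (m + j) (c (m + j)))" for j
  have w_le: "\<bar>w j\<bar> \<le> int L" for j
    using small[of "m + j"] by (cases "w j = 0") (auto simp: w_def)
  define S where "S = (\<Sum>j<L - m. int C ^ j * w j)"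
  have diff: "int (shift b) - int (shift c) = int G * S"
    unfolding shift_def S_def w_def
    by (simp add: of_nat_sum sum_subtractf[symmetric] sum_distrib_left right_diff_distrib mult.assoc)
  have "i0 < L" using small i0 by blast
  then have "w (i0 - m) \<noteq> 0" "i0 - m < L - m" using i0 by (auto simp: w_def)
  moreover have "\<bar>w j\<bar> < int C" for j using w_le[of j] by (simp add: C_def)
  ultimately have "S \<noteq> 0"
    using digits_eq_0_if_expansion_eq_0[of "L - m" w "int C"] unfolding S_def by blast
  then show "int G \<le> \<bar>int (shift b) - int (shift c)\<bar>"
    using diff mult_left_mono[of 1 "\<bar>S\<bar>" "int G"] by (simp add: abs_mult)
  have "\<bar>S\<bar> \<le> (\<Sum>j<L - m. int C ^ j * int L)"
    unfolding S_def using w_le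
    by (intro order_trans[OF sum_abs] sum_mono) (simp add: abs_mult mult_left_mono)
  also have "\<dots> = int L * (\<Sum>j<L - m. int C ^ j)" by (simp add: sum_distrib_left mult.commute)
  finally have "int G * \<bar>S\<bar> \<le> int A"
    using mult_left_mono[of "\<bar>S\<bar>" _ "int G"] by (simp add: A_def of_nat_sum mult.assoc)
  then show "\<bar>int (shift b) - int (shift c)\<bar> \<le> int A" using diff by (simp add: abs_mult)
qed

lemma dd_gt_L_if_shift_moves:
  assumes b: "b \<in> X" and c: "c \<in> X" and "colour b = colour c" "colour b \<noteq> {}"
    and "int G \<le> \<bar>int (shift b) - int (shift c)\<bar>" "\<bar>int (shift b) - int (shift c)\<bar> \<le> int A"
  shows "real L + 1 \<le> dd b c"
proof -
  obtain k where k: "shifted_depth k b mod K < g" "shifted_depth k c mod K < g"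
    using assms(3,4) unfolding colour_def by auto
  have "int L + 1 \<le> \<bar>int (depth k (b k)) - int (depth k (c k))\<bar>"
    by (rule shifted_residue_diff_gt[OF int_depth_eq int_depth_eq, where g = "int g" and G = "int G"])
      (use k assms(5,6) in \<open>simp_all add: K_def g_def G_def\<close>)
  also have "\<dots> \<le> int (gd k (b k) (c k))" by (rule depth_diff_le_gd[OF b c])
  finally show ?thesis using dd_ge_if_gd_ge[OF b c, of "L + 1" k] by simp
qed

lemma dd_gt_L_if_tail_depths_differ:
  assumes b: "b \<in> X" and c: "c \<in> X" and col: "colour b = colour c" "colour b \<noteq> {}"
    and i0: "m \<le> i0" "depth i0 (b i0) \<noteq> depth i0 (c i0)"
  shows "real L + 1 \<le> dd b c"
proof (cases "\<exists>i\<ge>m. depth i (b i) \<noteq> depth i (c i) \<and>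
    \<not> (i < L \<and> \<bar>int (depth i (b i)) - int (depth i (c i))\<bar> \<le> int L)")
  case True
  then obtain i where i: "depth i (b i) \<noteq> depth i (c i)"
    "\<not> (i < L \<and> \<bar>int (depth i (b i)) - int (depth i (c i))\<bar> \<le> int L)" by blast
  show ?thesis
  proof (cases "L \<le> i")
    case True
    then show ?thesis using dd_ge_if_coord_ne[OF b c, of i] i(1) by force
  next
    case False
    then have "L + 1 \<le> gd i (b i) (c i)" using i(2) depth_diff_le_gd[OF b c, of i] by linarith
    then show ?thesis using dd_ge_if_gd_ge[OF b c] by fastforce
  qed
next
  case False
  then have "\<And>i. m \<le> i \<Longrightarrow> depth i (b i) \<noteq> depth i (c i) \<Longrightarrow>
      i < L \<and> \<bar>int (depth i (b i)) - int (depth i (c i))\<bar> \<le> int L" by blast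
  from shift_diff_bounds[OF this i0] show ?thesis by (rule dd_gt_L_if_shift_moves[OF b c col])
qed

lemma dd_gt_L_if_tail_depths_agree:
  assumes b: "b \<in> X" and c: "c \<in> X" and col: "colour b = colour c" and ne: "key b \<noteq> key c"
    and tail: "\<And>i. m \<le> i \<Longrightarrow> depth i (b i) = depth i (c i)"
  shows "real L + 1 \<le> dd b c"
proof -
  have sh: "shift b = shift c" by (rule shift_eq[OF tail])
  show ?thesis
  proof (cases "\<exists>k<m. shifted_depth k b div K \<noteq> shifted_depth k c div K")
    case True
    then show ?thesis using dd_gt_L_if_quotients_differ[OF b c col sh] by blast
  next
    case False
    have "\<exists>i. anc i (b i) (anc_level i b) \<noteq> anc i (c i) (anc_level i c)"
    proof (rule ccontr)
      assume "\<not> ?thesis"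
      then have "key b = key c" unfolding key_def using col False tail by (auto intro!: ext)
      then show False using ne by simp
    qed
    then obtain i where i: "anc i (b i) (anc_level i b) \<noteq> anc i (c i) (anc_level i c)" by blast
    have "level i b = level i c"
      using False tail sh unfolding level_def shifted_depth_def by (cases "i < m") auto
    then show ?thesis using dd_gt_L_if_ancestors_differ[OF b c _ i] by blast
  qed
qed

lemma dd_gt_if_key_ne:
  assumes b: "b \<in> X" and c: "c \<in> X" and col: "colour b = colour c" and ne: "key b \<noteq> key c"
  shows "real m + 1 \<le> dd b c" "colour b \<noteq> {} \<Longrightarrow> real L + 1 \<le> dd b c"
proof -
  have "real m + 1 \<le> dd b c \<and> (colour b \<noteq> {} \<longrightarrow> real L + 1 \<le> dd b c)"
  proof (cases "\<exists>i\<ge>m. depth i (b i) \<noteq> depth i (c i)")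
    case True
    then obtain i where i: "m \<le> i" "depth i (b i) \<noteq> depth i (c i)" by blast
    then have "real (Suc i) \<le> dd b c" using dd_ge_if_coord_ne[OF b c] by (metis (full_types))
    then show ?thesis using i dd_gt_L_if_tail_depths_differ[OF b c col _ i] by auto
  next
    case False
    then show ?thesis using dd_gt_L_if_tail_depths_agree[OF b c col ne] m_le_L by force
  qed
  then show "real m + 1 \<le> dd b c" "colour b \<noteq> {} \<Longrightarrow> real L + 1 \<le> dd b c" by auto
qed

lemma family_cells: "U \<in> family t \<Longrightarrow> U \<noteq> {} \<and> U \<subseteq> X"
  by (auto simp: family_def cell_def)

lemma family_uniformly_bounded: "uniformly_bounded dd (family t)"
  unfolding uniformly_bounded_def
  by (intro exI[of _ cell_diam]) (auto simp: family_def cell_def intro: dd_le_if_key_eq)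

lemma family_R_disjoint:
  assumes t: "t \<le> n"
  shows "R_disjoint dd (R t) (family t)"
  unfolding R_disjoint_def
proof (intro ballI impI)
  fix U W assume UW: "U \<in> family t" "W \<in> family t" "U \<noteq> W"
  then obtain a a' where a: "U = cell a" "a \<in> X" "set_encode (colour a) = t"
    and a': "W = cell a'" "a' \<in> X" "set_encode (colour a') = t"
    by (auto simp: family_def)
  have finite_colour: "finite (colour a)" for a by (simp add: colour_def)
  have col: "colour a = colour a'" using a(3) a'(3) set_encode_eq[OF finite_colour[of a] finite_colour[of a']] by simp
  have key: "key a \<noteq> key a'" using UW a a' by (auto simp: cell_def)
  have nonempty: "t \<noteq> 0 \<Longrightarrow> colour a \<noteq> {}" using a(3) by auto
  define D where "D = (if t = 0 then real m + 1 else real L + 1)"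
  have "R t < D"
    using R0_lt_m R_le_L[OF t] by (simp add: D_def)
  moreover have "D \<le> set_distance dd U W"
  proof (rule set_distance_ge)
    show "U \<noteq> {}" "W \<noteq> {}" using a a' by (auto simp: cell_def)
    fix b c assume "b \<in> U" "c \<in> W"
    then have bc: "b \<in> X" "c \<in> X" "key b = key a" "key c = key a'" using a a' by (auto simp: cell_def)
    have cb: "colour b = colour a" "colour c = colour a'"
      using key_eqD(1)[OF bc(3)] key_eqD(1)[OF bc(4)] by simp_all
    have "colour b = colour c" "key b \<noteq> key c" using cb col bc(3,4) key by simp_all
    note sep = dd_gt_if_key_ne[OF bc(1,2) this]
    show "D \<le> dd b c"
    proof (cases "t = 0")
      case True
      then show ?thesis using sep(1) by (simp add: D_def)
    next
      case False
      then have "colour b \<noteq> {}" using nonempty cb by simp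
      then show ?thesis using sep(2) False by (simp add: D_def)
    qed
  qed
  ultimately show "R t < set_distance dd U W" by linarith
qed

lemma families_cover: "X \<subseteq> (\<Union>t\<le>n. \<Union>(family t))"
proof
  fix a assume a: "a \<in> X"
  have "set_encode (colour a) \<le> n"
    unfolding n_def set_encode_def by (rule sum_mono2) (auto simp: colour_def)
  moreover have "a \<in> cell a" "cell a \<in> family (set_encode (colour a))"
    using a by (auto simp: cell_def family_def)
  ultimately show "a \<in> (\<Union>t\<le>n. \<Union>(family t))" by blast
qed

lemma finite_colouring:
  "\<exists>n \<U>. (\<forall>t\<le>n. (\<forall>U\<in>\<U> t. U \<noteq> {} \<and> U \<subseteq> X) \<and> uniformly_bounded dd (\<U> t)
      \<and> R_disjoint dd (R t) (\<U> t)) \<and> X \<subseteq> (\<Union>t\<le>n. \<Union>(\<U> t))"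
  by (intro exI[of _ n] exI[of _ family])
    (use family_cells family_uniformly_bounded family_R_disjoint families_cover in blast)

end

theorem theorem3p3:
  fixes V :: "nat \<Rightarrow> 'a set" and E :: "nat \<Rightarrow> 'a \<Rightarrow> 'a \<Rightarrow> bool" and x :: "nat \<Rightarrow> 'a"
  assumes "\<And>i. is_tree (V i) (E i)"
    and "\<And>i. x i \<in> V i"
  shows "asymptotic_property_C (restricted_product V x) (restricted_product_dist V E)"
proof -
  have cover: "tree_product_cover V E x R" if "(\<forall>i. R i > 0) \<and> mono R" for R
    using assms that by unfold_locales auto
  show ?thesis
    unfolding asymptotic_property_C_def
    by (intro allI impI tree_product_cover.finite_colouring cover)
qed

end
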